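(* Let $S$ be the surface of revolution $\boldsymbol{x}(u,v)=(p(u)\cos v,\,p(u)\sin v,\,q(u))$ with nowhere vanishing Gaussian curvature, and suppose $\Delta^{II}\boldsymbol{x}=A\boldsymbol{x}$ for a real $3\times3$ matrix $A=(a_{ij})$. Then $A=\mathrm{diag}(\lambda,\lambda,\mu)$ for some real numbers $\lambda,\mu$, i.e. $a_{12}=a_{13}=a_{21}=a_{23}=a_{31}=a_{32}=0$ and $a_{11}=a_{22}$. Moreover $\lambda$ and $\mu$ are not both zero, i.e. there is no such surface with $\Delta^{II}\boldsymbol{x}=0$.
   Context: Here $p,q$ are smooth on an interval $(a,b)$, $p>0$, $(p')^{2}+(q')^{2}=1$, $v\in[0,2\pi)$. Let $\boldsymbol{n}$ be the unit normal $\frac{\boldsymbol{x}_{u}\times\boldsymbol{x}_{v}}{\|\boldsymbol{x}_{u}\times\boldsymbol{x}_{v}\|}$ and $II=b_{ij}du^{i}du^{j}$ the second fundamental form, $b_{ij}=\langle \boldsymbol{x}_{u^iu^j},\boldsymbol{n}\rangle$, $(u^1,u^2)=(u,v)$; nonvanishing Gaussian curvature makes $(b_{ij})$ invertible with inverse $(b^{ij})$, and $b=\det(b_{ij})$. For smooth $f$, $\Delta^{II}f=-\frac{1}{\sqrt{|b|}}\partial_{u^{i}}\big(\sqrt{|b|}\,b^{ij}\partial_{u^{j}}f\big)$, and $\Delta^{II}\boldsymbol{x}$ is applied componentwise to the coordinate functions $(x_1,x_2,x_3)$ of $\boldsymbol{x}$. *)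

theory Defs
  imports "HOL-Analysis.Analysis"
begin

definition pd :: "nat \<Rightarrow> (real \<times> real \<Rightarrow> 'a::real_normed_vector) \<Rightarrow> real \<times> real \<Rightarrow> 'a" where
  "pd i f w = (if i = 1 then vector_derivative (\<lambda>t. f (t, snd w)) (at (fst w))
               else vector_derivative (\<lambda>t. f (fst w, t)) (at (snd w)))"

definition unit_normal :: "(real \<times> real \<Rightarrow> real^3) \<Rightarrow> real \<times> real \<Rightarrow> real^3" where
  "unit_normal X w = (let c = cross3 (pd 1 X w) (pd 2 X w) in (1 / norm c) *\<^sub>R c)"

definition gff :: "(real \<times> real \<Rightarrow> real^3) \<Rightarrow> nat \<Rightarrow> nat \<Rightarrow> real \<times> real \<Rightarrow> real" where
  "gff X i j w = pd i X w \<bullet> pd j X w"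

definition sff :: "(real \<times> real \<Rightarrow> real^3) \<Rightarrow> nat \<Rightarrow> nat \<Rightarrow> real \<times> real \<Rightarrow> real" where
  "sff X i j w = pd i (pd j X) w \<bullet> unit_normal X w"

definition det_sff :: "(real \<times> real \<Rightarrow> real^3) \<Rightarrow> real \<times> real \<Rightarrow> real" where
  "det_sff X w = sff X 1 1 w * sff X 2 2 w - sff X 1 2 w * sff X 2 1 w"

definition det_gff :: "(real \<times> real \<Rightarrow> real^3) \<Rightarrow> real \<times> real \<Rightarrow> real" where
  "det_gff X w = gff X 1 1 w * gff X 2 2 w - gff X 1 2 w * gff X 2 1 w"

definition gauss_curvature :: "(real \<times> real \<Rightarrow> real^3) \<Rightarrow> real \<times> real \<Rightarrow> real" where
  "gauss_curvature X w = det_sff X w / det_gff X w"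

definition sff_inv :: "(real \<times> real \<Rightarrow> real^3) \<Rightarrow> nat \<Rightarrow> nat \<Rightarrow> real \<times> real \<Rightarrow> real" where
  "sff_inv X i j w =
     (if i = 1 \<and> j = 1 then sff X 2 2 w
      else if i = 2 \<and> j = 2 then sff X 1 1 w
      else - sff X i j w) / det_sff X w"

definition lap_II :: "(real \<times> real \<Rightarrow> real^3) \<Rightarrow> (real \<times> real \<Rightarrow> real) \<Rightarrow> real \<times> real \<Rightarrow> real" where
  "lap_II X f w = - (1 / sqrt \<bar>det_sff X w\<bar>) *
     (\<Sum>i\<in>{1,2}. pd i (\<lambda>z. sqrt \<bar>det_sff X z\<bar> * (\<Sum>j\<in>{1,2}. sff_inv X i j z * pd j f z)) w)"

definition lap_II_vec :: "(real \<times> real \<Rightarrow> real^3) \<Rightarrow> real \<times> real \<Rightarrow> real^3" where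
  "lap_II_vec X w = (\<chi> k. lap_II X (\<lambda>z. X z $ k) w)"

definition surf_rev :: "(real \<Rightarrow> real) \<Rightarrow> (real \<Rightarrow> real) \<Rightarrow> real \<times> real \<Rightarrow> real^3" where
  "surf_rev p q w = vector [p (fst w) * cos (snd w), p (fst w) * sin (snd w), q (fst w)]"

definition smooth_on_interval :: "(real \<Rightarrow> real) \<Rightarrow> real set \<Rightarrow> bool" where
  "smooth_on_interval f S \<longleftrightarrow> (\<forall>k. \<forall>t\<in>S. ((deriv ^^ k) f) differentiable (at t))"

end

theory Submission imports Defs begin

text \<open>
  For a surface of revolution the second fundamental form is diagonal,
  \<open>II = \<kappa> du\<^sup>2 + p q' dv\<^sup>2\<close> with \<open>\<kappa> = p' q'' - p'' q'\<close> the curvature of the unit-speed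
  profile curve, so \<open>\<Delta>\<^sup>I\<^sup>I\<close> separates variables and
  \<open>\<Delta>\<^sup>I\<^sup>I x = (F(u) cos v, F(u) sin v, H(u))\<close>.
  Comparing with \<open>A x\<close> at \<open>v = 0, \<pi>/2, \<pi>\<close> at a point where \<open>q \<noteq> 0\<close> (such a point exists,
  since \<open>q' = 0\<close> would make the curvature vanish) forces \<open>A = diag(\<lambda>, \<lambda>, \<mu>)\<close>.
  If \<open>\<lambda> = \<mu> = 0\<close>, then \<open>H = 0\<close> says that the flux \<open>\<surd>|b| b\<^sup>1\<^sup>1 q'\<close> is stationary, and
  differentiating \<open>\<surd>|b| b\<^sup>1\<^sup>1 p' = (\<surd>|b| b\<^sup>1\<^sup>1 q') p'/q'\<close> turns \<open>F = 0\<close> into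
  \<open>\<surd>|b|/q' = -\<surd>|b|/q'\<close>, which is absurd.
\<close>

(* keeps the coordinate index in pd 1 from being rewritten to Suc 0 *)
declare One_nat_def [simp del]

lemma vector3_eq_sum:
  "(vector [x, y, z] :: real^3) = x *\<^sub>R vector [1,0,0] + y *\<^sub>R vector [0,1,0] + z *\<^sub>R vector [0,0,1]"
  by (simp add: vec_eq_iff forall_3)

lemma has_vector_derivative_vector3:
  assumes "(f1 has_real_derivative d1) (at t)" "(f2 has_real_derivative d2) (at t)"
    "(f3 has_real_derivative d3) (at t)"
  shows "((\<lambda>t. vector [f1 t, f2 t, f3 t] :: real^3) has_vector_derivative vector [d1, d2, d3]) (at t)"
proof -
  have "((\<lambda>t. f1 t *\<^sub>R vector [1,0,0] + f2 t *\<^sub>R vector [0,1,0] + f3 t *\<^sub>R vector [0,0,1] :: real^3)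
     has_vector_derivative (d1 *\<^sub>R vector [1,0,0] + d2 *\<^sub>R vector [0,1,0] + d3 *\<^sub>R vector [0,0,1])) (at t)"
    by (rule derivative_eq_intros assms has_vector_derivative_const refl)+ simp
  then show ?thesis by (simp only: vector3_eq_sum[symmetric])
qed

lemma pd_1_eqI:
  assumes "open S" "fst w \<in> S" "\<And>t. t \<in> S \<Longrightarrow> f (t, snd w) = g t"
    "(g has_vector_derivative g') (at (fst w))"
  shows "pd 1 f w = g'"
  unfolding pd_def
  using has_vector_derivative_transform_within_open[OF assms(4,1,2), of "\<lambda>t. f (t, snd w)"] assms(3)
  by (simp add: vector_derivative_at)

lemma pd_2_eqI:
  assumes "\<And>t. f (fst w, t) = g t" "(g has_vector_derivative g') (at (snd w))"
  shows "pd 2 f w = g'"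
  unfolding pd_def using assms by (simp add: vector_derivative_at)

lemma pd_1_eqI_real:
  assumes "open S" "fst w \<in> S" "\<And>t. t \<in> S \<Longrightarrow> f (t, snd w) = g t"
    "(g has_real_derivative g') (at (fst w))"
  shows "pd 1 f w = (g' :: real)"
  using pd_1_eqI[of S w f g, OF assms(1-3)] assms(4) by (simp add: has_real_derivative_iff_has_vector_derivative)

lemma pd_2_eqI_real:
  assumes "\<And>t. f (fst w, t) = g t" "(g has_real_derivative g') (at (snd w))"
  shows "pd 2 f w = (g' :: real)"
  using pd_2_eqI[of f w g, OF assms(1)] assms(2) by (simp add: has_real_derivative_iff_has_vector_derivative)

lemma smooth_on_interval_deriv:
  "smooth_on_interval f S \<Longrightarrow> smooth_on_interval (deriv f) S"
  unfolding smooth_on_interval_def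
  by (metis funpow.simps(2) funpow_Suc_right o_apply)

lemma smooth_on_interval_has_real_derivative:
  "smooth_on_interval f S \<Longrightarrow> t \<in> S \<Longrightarrow> (f has_real_derivative deriv f t) (at t)"
  unfolding smooth_on_interval_def
  by (metis DERIV_deriv_iff_real_differentiable funpow_0)

lemma lap_II_expand:
  "lap_II X f w = -(1 / sqrt \<bar>det_sff X w\<bar>) *
     (pd 1 (\<lambda>z. sqrt \<bar>det_sff X z\<bar> * (sff_inv X 1 1 z * pd 1 f z + sff_inv X 1 2 z * pd 2 f z)) w
    + pd 2 (\<lambda>z. sqrt \<bar>det_sff X z\<bar> * (sff_inv X 2 1 z * pd 1 f z + sff_inv X 2 2 z * pd 2 f z)) w)"
  by (simp add: lap_II_def)

lemma cos_mult_cos_mult_add_sin_mult_sin_mult [simp]: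
  "cos v * (cos v * x) + sin v * (sin v * x) = (x :: real)"
proof -
  have "cos v * (cos v * x) + sin v * (sin v * x) = x * (cos v * cos v + sin v * sin v)"
    by algebra
  then show ?thesis by (simp only: sin_cos_squared_add3 mult_1_right)
qed

subsection \<open>The fundamental forms of a surface of revolution\<close>

locale surface_of_revolution =
  fixes p q :: "real \<Rightarrow> real" and I :: "real set"
  assumes open_I: "open I"
    and smooth_p: "smooth_on_interval p I" and smooth_q: "smooth_on_interval q I"
    and p_pos: "\<And>t. t \<in> I \<Longrightarrow> p t > 0"
    and unit_speed: "\<And>t. t \<in> I \<Longrightarrow> (deriv p t)\<^sup>2 + (deriv q t)\<^sup>2 = 1"
begin

abbreviation "X \<equiv> surf_rev p q"

lemma has_derivs:
  assumes "t \<in> I"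
  shows "(p has_real_derivative deriv p t) (at t)"
    "(deriv p has_real_derivative deriv (deriv p) t) (at t)"
    "(deriv (deriv p) has_real_derivative deriv (deriv (deriv p)) t) (at t)"
    "(q has_real_derivative deriv q t) (at t)"
    "(deriv q has_real_derivative deriv (deriv q) t) (at t)"
    "(deriv (deriv q) has_real_derivative deriv (deriv (deriv q)) t) (at t)"
  using assms smooth_p smooth_q
  by (meson smooth_on_interval_has_real_derivative smooth_on_interval_deriv)+

lemma X_eq: "X (u, v) = vector [p u * cos v, p u * sin v, q u]"
  by (simp add: surf_rev_def)

lemma pd_1_X: "u \<in> I \<Longrightarrow> pd 1 X (u, v) = vector [deriv p u * cos v, deriv p u * sin v, deriv q u]"
  by (rule pd_1_eqI[OF open_I, where g = "\<lambda>t. vector [p t * cos v, p t * sin v, q t]"])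
    (auto simp: X_eq intro!: has_vector_derivative_vector3 derivative_eq_intros has_derivs)

lemma pd_2_X: "pd 2 X (u, v) = vector [- p u * sin v, p u * cos v, 0]"
  by (rule pd_2_eqI[where g = "\<lambda>t. vector [p u * cos t, p u * sin t, q u]"])
    (auto simp: X_eq intro!: has_vector_derivative_vector3 derivative_eq_intros)

lemma pd_11_X:
  "u \<in> I \<Longrightarrow> pd 1 (pd 1 X) (u, v) = vector [deriv (deriv p) u * cos v, deriv (deriv p) u * sin v, deriv (deriv q) u]"
  by (rule pd_1_eqI[OF open_I, where g = "\<lambda>t. vector [deriv p t * cos v, deriv p t * sin v, deriv q t]"])
    (auto simp: pd_1_X intro!: has_vector_derivative_vector3 derivative_eq_intros has_derivs)

lemma pd_12_X: "u \<in> I \<Longrightarrow> pd 1 (pd 2 X) (u, v) = vector [- deriv p u * sin v, deriv p u * cos v, 0]"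
  by (rule pd_1_eqI[OF open_I, where g = "\<lambda>t. vector [- p t * sin v, p t * cos v, 0]"])
    (auto simp: pd_2_X intro!: has_vector_derivative_vector3 derivative_eq_intros has_derivs)

lemma pd_21_X: "u \<in> I \<Longrightarrow> pd 2 (pd 1 X) (u, v) = vector [- deriv p u * sin v, deriv p u * cos v, 0]"
  by (rule pd_2_eqI[where g = "\<lambda>t. vector [deriv p u * cos t, deriv p u * sin t, deriv q u]"])
    (auto simp: pd_1_X intro!: has_vector_derivative_vector3 derivative_eq_intros)

lemma pd_22_X: "pd 2 (pd 2 X) (u, v) = vector [- p u * cos v, - p u * sin v, 0]"
  by (rule pd_2_eqI[where g = "\<lambda>t. vector [- p u * sin t, p u * cos t, 0]"])
    (auto simp: pd_2_X intro!: has_vector_derivative_vector3 derivative_eq_intros)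

lemma unit_normal_X:
  assumes u: "u \<in> I"
  shows "unit_normal X (u, v) = vector [- deriv q u * cos v, - deriv q u * sin v, deriv p u]"
proof -
  let ?n = "vector [- deriv q u * cos v, - deriv q u * sin v, deriv p u] :: real^3"
  have cross: "cross3 (pd 1 X (u, v)) (pd 2 X (u, v)) = p u *\<^sub>R ?n"
    by (simp add: pd_1_X pd_2_X u cross3_def vec_eq_iff forall_3 algebra_simps)
  have "?n \<bullet> ?n = (deriv q u)\<^sup>2 * ((sin v)\<^sup>2 + (cos v)\<^sup>2) + (deriv p u)\<^sup>2"
    by (simp add: inner_vec_def sum_3 power2_eq_square algebra_simps)
  then have "norm ?n = 1"
    using unit_speed[OF u] by (simp add: norm_eq_sqrt_inner)
  then show ?thesis
    unfolding unit_normal_def Let_def cross using p_pos[OF u] by simp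
qed

definition profile_curvature :: "real \<Rightarrow> real" where
  "profile_curvature t = deriv p t * deriv (deriv q) t - deriv (deriv p) t * deriv q t"

definition det_II :: "real \<Rightarrow> real" where
  "det_II t = profile_curvature t * (p t * deriv q t)"

lemma sff_X:
  assumes u: "u \<in> I"
  shows "sff X 1 1 (u, v) = profile_curvature u"
    and "sff X 1 2 (u, v) = 0" and "sff X 2 1 (u, v) = 0"
    and "sff X 2 2 (u, v) = p u * deriv q u"
proof -
  have "sff X 1 1 (u, v) = (deriv p u * deriv (deriv q) u - deriv (deriv p) u * deriv q u) * ((sin v)\<^sup>2 + (cos v)\<^sup>2)"
    by (simp add: sff_def pd_11_X unit_normal_X u inner_vec_def sum_3 power2_eq_square algebra_simps)
  then show "sff X 1 1 (u, v) = profile_curvature u"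
    by (simp add: profile_curvature_def)
  show "sff X 1 2 (u, v) = 0" "sff X 2 1 (u, v) = 0"
    by (simp_all add: sff_def pd_12_X pd_21_X unit_normal_X u inner_vec_def sum_3 algebra_simps)
  have "sff X 2 2 (u, v) = p u * deriv q u * ((sin v)\<^sup>2 + (cos v)\<^sup>2)"
    by (simp add: sff_def pd_22_X unit_normal_X u inner_vec_def sum_3 power2_eq_square algebra_simps)
  then show "sff X 2 2 (u, v) = p u * deriv q u"
    by simp
qed

lemma det_sff_X: "u \<in> I \<Longrightarrow> det_sff X (u, v) = det_II u"
  by (simp add: det_sff_def sff_X det_II_def)


end

subsection \<open>The second-fundamental-form Laplacian of the position vector\<close>

locale nondegenerate_surface_of_revolution = surface_of_revolution +
  assumes det_II_nonzero: "\<And>t. t \<in> I \<Longrightarrow> det_II t \<noteq> 0"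
begin

lemma profile_curvature_nonzero: "t \<in> I \<Longrightarrow> profile_curvature t \<noteq> 0"
  and deriv_q_nonzero: "t \<in> I \<Longrightarrow> deriv q t \<noteq> 0"
  using det_II_nonzero[of t] by (auto simp: det_II_def)

lemma q_somewhere_nonzero:
  assumes "I \<noteq> {}"
  shows "\<exists>u\<in>I. q u \<noteq> 0"
proof (rule ccontr)
  assume "\<not> ?thesis"
  then have q0: "\<And>t. t \<in> I \<Longrightarrow> q t = 0" by blast
  obtain u where u: "u \<in> I" using assms by blast
  have "(q has_real_derivative 0) (at u)"
    by (rule has_field_derivative_transform_within_open[OF DERIV_const open_I u]) (simp add: q0)
  then have "deriv q u = 0" using DERIV_unique[OF has_derivs(4)[OF u]] by blast
  then show False using deriv_q_nonzero[OF u] by blast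
qed

definition sqrt_det_II :: "real \<Rightarrow> real" where
  "sqrt_det_II t = sqrt \<bar>det_II t\<bar>"

lemma sqrt_det_II_pos: "t \<in> I \<Longrightarrow> sqrt_det_II t > 0"
  using det_II_nonzero[of t] by (simp add: sqrt_det_II_def)

lemma sff_inv_X:
  assumes "u \<in> I"
  shows "sff_inv X 1 1 (u, v) = 1 / profile_curvature u"
    and "sff_inv X 1 2 (u, v) = 0" and "sff_inv X 2 1 (u, v) = 0"
    and "sff_inv X 2 2 (u, v) = 1 / (p u * deriv q u)"
  using assms profile_curvature_nonzero[OF assms] deriv_q_nonzero[OF assms] p_pos[OF assms]
  by (simp_all add: sff_inv_def det_sff_X sff_X det_II_def)

lemma lap_II_via_partials:
  assumes u: "u \<in> I"
    and pd1: "\<And>t. t \<in> I \<Longrightarrow> pd 1 f (t, v) = \<phi> t"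
    and pd2: "\<And>t. pd 2 f (u, t) = \<psi> t"
    and d\<psi>: "(\<psi> has_real_derivative \<psi>') (at v)"
    and d\<phi>: "((\<lambda>t. sqrt_det_II t / profile_curvature t * \<phi> t) has_real_derivative \<Phi>') (at u)"
  shows "lap_II X f (u, v) = -(1 / sqrt_det_II u) * (\<Phi>' + sqrt_det_II u / (p u * deriv q u) * \<psi>')"
proof -
  have "pd 1 (\<lambda>z. sqrt \<bar>det_sff X z\<bar> * (sff_inv X 1 1 z * pd 1 f z + sff_inv X 1 2 z * pd 2 f z)) (u, v) = \<Phi>'"
    by (rule pd_1_eqI_real[OF open_I, where g = "\<lambda>t. sqrt_det_II t / profile_curvature t * \<phi> t"])
      (use u d\<phi> in \<open>simp_all add: det_sff_X sff_inv_X pd1 sqrt_det_II_def\<close>)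
  moreover have "pd 2 (\<lambda>z. sqrt \<bar>det_sff X z\<bar> * (sff_inv X 2 1 z * pd 1 f z + sff_inv X 2 2 z * pd 2 f z)) (u, v)
      = sqrt_det_II u / (p u * deriv q u) * \<psi>'"
    by (rule pd_2_eqI_real[where g = "\<lambda>t. sqrt_det_II u / (p u * deriv q u) * \<psi> t"])
      (use u p_pos[OF u] deriv_q_nonzero[OF u] in
        \<open>auto simp: det_sff_X sff_inv_X pd2 sqrt_det_II_def intro!: derivative_eq_intros d\<psi>\<close>)
  ultimately show ?thesis
    unfolding lap_II_expand using u by (simp add: det_sff_X sqrt_det_II_def)
qed

lemma derivs_differentiable:
  assumes "u \<in> I"
  shows "p differentiable (at u)" "deriv p differentiable (at u)" "deriv (deriv p) differentiable (at u)"
    "q differentiable (at u)" "deriv q differentiable (at u)" "deriv (deriv q) differentiable (at u)"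
  using has_derivs[OF assms] by (auto simp: real_differentiable_def)

lemma profile_curvature_differentiable: "u \<in> I \<Longrightarrow> profile_curvature differentiable (at u)"
  unfolding profile_curvature_def [abs_def] using derivs_differentiable
  by (auto intro!: derivative_intros)

lemma sqrt_det_II_differentiable: "u \<in> I \<Longrightarrow> sqrt_det_II differentiable (at u)"
proof -
  assume u: "u \<in> I"
  have "det_II differentiable (at u)"
    unfolding det_II_def [abs_def] using profile_curvature_differentiable[OF u] derivs_differentiable[OF u]
    by (auto intro!: derivative_intros)
  then obtain d where d: "(det_II has_real_derivative d) (at u)"
    by (auto simp: real_differentiable_def)
  have sq: "0 < det_II u * det_II u" and root: "0 < sqrt (det_II u * det_II u)"
    using det_II_nonzero[OF u] by (simp_all add: zero_less_mult_iff linorder_neq_iff disj_commute)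
  have "sqrt_det_II = (\<lambda>t. sqrt (sqrt (det_II t * det_II t)))"
    by (simp add: fun_eq_iff sqrt_det_II_def)
  then show ?thesis
    using DERIV_chain2[OF DERIV_real_sqrt[OF root] DERIV_chain2[OF DERIV_real_sqrt[OF sq] DERIV_mult[OF d d]]]
    by (auto simp: real_differentiable_def)
qed

text \<open>\<open>\<surd>|b| b\<^sup>1\<^sup>1 \<partial>\<^sub>u\<close> of the radial and of the axial coordinate of \<open>x\<close>; the factors \<open>cos v\<close>, \<open>sin v\<close>
  of the first two coordinates are split off.\<close>

definition radial_flux :: "real \<Rightarrow> real" where
  "radial_flux t = sqrt_det_II t / profile_curvature t * deriv p t"

definition axial_flux :: "real \<Rightarrow> real" where
  "axial_flux t = sqrt_det_II t / profile_curvature t * deriv q t"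

lemma has_derivative_fluxes:
  assumes u: "u \<in> I"
  shows "(radial_flux has_real_derivative deriv radial_flux u) (at u)"
    and "(axial_flux has_real_derivative deriv axial_flux u) (at u)"
proof -
  have "radial_flux differentiable (at u)" "axial_flux differentiable (at u)"
    unfolding radial_flux_def [abs_def] axial_flux_def [abs_def]
    using sqrt_det_II_differentiable[OF u] profile_curvature_differentiable[OF u]
      profile_curvature_nonzero[OF u] derivs_differentiable[OF u]
    by (auto intro!: derivative_intros)
  then show "(radial_flux has_real_derivative deriv radial_flux u) (at u)"
    "(axial_flux has_real_derivative deriv axial_flux u) (at u)"
    by (simp_all add: DERIV_deriv_iff_real_differentiable)
qed

definition lap_radial :: "real \<Rightarrow> real" where
  "lap_radial u = -(1 / sqrt_det_II u) * (deriv radial_flux u - sqrt_det_II u / deriv q u)"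

definition lap_axial :: "real \<Rightarrow> real" where
  "lap_axial u = -(1 / sqrt_det_II u) * deriv axial_flux u"

lemma lap_II_radial_component:
  assumes u: "u \<in> I"
    and dc: "\<And>t. (c has_real_derivative c' t) (at t)"
    and dc': "\<And>t. (c' has_real_derivative - c t) (at t)"
  shows "lap_II X (\<lambda>z. p (fst z) * c (snd z)) (u, v) = lap_radial u * c v"
proof -
  have "lap_II X (\<lambda>z. p (fst z) * c (snd z)) (u, v) = -(1 / sqrt_det_II u) *
      (deriv radial_flux u * c v + sqrt_det_II u / (p u * deriv q u) * (- p u * c v))"
  proof (rule lap_II_via_partials[OF u])
    show "pd 1 (\<lambda>z. p (fst z) * c (snd z)) (t, v) = deriv p t * c v" if "t \<in> I" for t
      by (rule pd_1_eqI_real[OF open_I, where g = "\<lambda>t. p t * c v"])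
        (simp_all add: that DERIV_cmult_right has_derivs)
    show "pd 2 (\<lambda>z. p (fst z) * c (snd z)) (u, t) = p u * c' t" for t
      by (rule pd_2_eqI_real[where g = "\<lambda>t. p u * c t"]) (simp_all add: DERIV_cmult dc)
    show "((\<lambda>t. p u * c' t) has_real_derivative - p u * c v) (at v)"
      using DERIV_cmult[OF dc', of "p u"] by simp
    have "(\<lambda>t. sqrt_det_II t / profile_curvature t * (deriv p t * c v)) = (\<lambda>t. radial_flux t * c v)"
      by (simp add: fun_eq_iff radial_flux_def)
    then show "((\<lambda>t. sqrt_det_II t / profile_curvature t * (deriv p t * c v))
        has_real_derivative deriv radial_flux u * c v) (at u)"
      using DERIV_cmult_right[OF has_derivative_fluxes(1)[OF u]] by simp
  qed
  then show ?thesis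
    using p_pos[OF u] deriv_q_nonzero[OF u] sqrt_det_II_pos[OF u]
    by (simp add: lap_radial_def field_simps)
qed

lemma lap_II_axial_component:
  assumes u: "u \<in> I"
  shows "lap_II X (\<lambda>z. q (fst z)) (u, v) = lap_axial u"
proof -
  have "lap_II X (\<lambda>z. q (fst z)) (u, v) = -(1 / sqrt_det_II u) *
      (deriv axial_flux u + sqrt_det_II u / (p u * deriv q u) * 0)"
  proof (rule lap_II_via_partials[OF u])
    show "pd 1 (\<lambda>z. q (fst z)) (t, v) = deriv q t" if "t \<in> I" for t
      by (rule pd_1_eqI_real[OF open_I, where g = q]) (simp_all add: that has_derivs)
    show "pd 2 (\<lambda>z. q (fst z)) (u, t) = 0" for t
      by (rule pd_2_eqI_real[where g = "\<lambda>t. q u"]) simp_all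
    show "((\<lambda>t. 0) has_real_derivative 0) (at v)"
      by simp
    have "(\<lambda>t. sqrt_det_II t / profile_curvature t * deriv q t) = axial_flux"
      by (simp add: fun_eq_iff axial_flux_def)
    then show "((\<lambda>t. sqrt_det_II t / profile_curvature t * deriv q t)
        has_real_derivative deriv axial_flux u) (at u)"
      using has_derivative_fluxes(2)[OF u] by simp
  qed
  then show ?thesis
    by (simp add: lap_axial_def)
qed

lemma lap_II_vec_X:
  assumes u: "u \<in> I"
  shows "lap_II_vec X (u, v) = vector [lap_radial u * cos v, lap_radial u * sin v, lap_axial u]"
proof -
  have coords: "(\<lambda>z. X z $ 1) = (\<lambda>z. p (fst z) * cos (snd z))"
    "(\<lambda>z. X z $ 2) = (\<lambda>z. p (fst z) * sin (snd z))" "(\<lambda>z. X z $ 3) = (\<lambda>z. q (fst z))"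
    by (simp_all add: fun_eq_iff surf_rev_def)
  have "lap_II X (\<lambda>z. p (fst z) * cos (snd z)) (u, v) = lap_radial u * cos v"
    by (rule lap_II_radial_component[OF u]) (auto intro!: derivative_eq_intros)
  moreover have "lap_II X (\<lambda>z. p (fst z) * sin (snd z)) (u, v) = lap_radial u * sin v"
    by (rule lap_II_radial_component[OF u]) (auto intro!: derivative_eq_intros)
  ultimately show ?thesis
    by (simp add: lap_II_vec_def vec_eq_iff forall_3 coords lap_II_axial_component[OF u])
qed

lemma lap_radial_or_axial_nonzero:
  assumes u: "u \<in> I" and radial: "lap_radial u = 0" and axial: "lap_axial u = 0"
  shows False
proof -
  let ?s = "sqrt_det_II u" and ?k = "profile_curvature u"
  have nz: "?k \<noteq> 0" "deriv q u \<noteq> 0" "?s > 0"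
    using profile_curvature_nonzero[OF u] deriv_q_nonzero[OF u] sqrt_det_II_pos[OF u] by auto
  have stationary: "deriv axial_flux u = 0"
    using axial nz by (simp add: lap_axial_def)
  define E where "E = deriv axial_flux u * (deriv p u / deriv q u)
    + (deriv (deriv p) u * deriv q u - deriv p u * deriv (deriv q) u) / (deriv q u * deriv q u) * axial_flux u"
  have "((\<lambda>t. axial_flux t * (deriv p t / deriv q t)) has_real_derivative E) (at u)"
    unfolding E_def
    by (rule DERIV_mult[OF has_derivative_fluxes(2)[OF u] DERIV_divide[OF has_derivs(2,5)[OF u] nz(2)]])
  then have "(radial_flux has_real_derivative E) (at u)"
    by (rule has_field_derivative_transform_within_open[OF _ open_I u])
      (use deriv_q_nonzero in \<open>auto simp: radial_flux_def axial_flux_def\<close>)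
  then have "deriv radial_flux u = E"
    using DERIV_unique[OF has_derivative_fluxes(1)[OF u]] by blast
  also have "E = - ?s / deriv q u"
    using nz stationary by (simp add: E_def axial_flux_def profile_curvature_def field_simps)
  finally have "deriv radial_flux u = - ?s / deriv q u" .
  moreover have "deriv radial_flux u = ?s / deriv q u"
    using radial nz by (simp add: lap_radial_def)
  ultimately show False
    using nz by (simp add: field_simps)
qed
end


subsection \<open>Coefficient comparison\<close>

lemma matrix_diagonal_if_rotation_compatible:
  fixes A :: "real^3^3"
  assumes r: "r \<noteq> 0" and z: "z \<noteq> 0"
    and eq: "\<And>v. v \<in> {0, pi/2, pi} \<Longrightarrow>
      A *v vector [r * cos v, r * sin v, z] = vector [f * cos v, f * sin v, h]"
  shows "A = (\<chi> i j. if i = j then (if i = 3 then A$3$3 else A$1$1) else 0)"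
    and "f = A$1$1 * r" and "h = A$3$3 * z"
proof -
  have rows: "A$1$1 * (r * cos v) + A$1$2 * (r * sin v) + A$1$3 * z = f * cos v"
    "A$2$1 * (r * cos v) + A$2$2 * (r * sin v) + A$2$3 * z = f * sin v"
    "A$3$1 * (r * cos v) + A$3$2 * (r * sin v) + A$3$3 * z = h"
    if "v \<in> {0, pi/2, pi}" for v
    using eq[OF that] by (simp_all add: vec_eq_iff forall_3 matrix_vector_mult_def sum_3)
  have at_0: "A$1$1 * r + A$1$3 * z = f" "A$2$1 * r + A$2$3 * z = 0" "A$3$1 * r + A$3$3 * z = h"
    using rows[of 0] by simp_all
  have at_pi: "- A$1$1 * r + A$1$3 * z = - f" "- A$2$1 * r + A$2$3 * z = 0" "- A$3$1 * r + A$3$3 * z = h"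
    using rows[of pi] by simp_all
  have at_half_pi: "A$1$2 * r + A$1$3 * z = 0" "A$2$2 * r + A$2$3 * z = f" "A$3$2 * r + A$3$3 * z = h"
    using rows[of "pi/2"] by simp_all
  have "A$1$3 * z = 0" "A$2$3 * z = 0" "A$2$1 * r = 0" "A$3$1 * r = 0"
    using at_0 at_pi by linarith+
  then have zeros: "A$1$3 = 0" "A$2$3 = 0" "A$2$1 = 0" "A$3$1 = 0"
    using r z by simp_all
  show f: "f = A$1$1 * r" and h: "h = A$3$3 * z"
    using at_0 zeros by (simp_all add: mult.commute)
  have "A$1$2 * r = 0" "A$2$2 * r = A$1$1 * r" "A$3$2 * r = 0"
    using at_half_pi zeros f h by simp_all
  then have "A$1$2 = 0" "A$2$2 = A$1$1" "A$3$2 = 0"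
    using r by simp_all
  with zeros show "A = (\<chi> i j. if i = j then (if i = 3 then A$3$3 else A$1$1) else 0)"
    by (simp add: vec_eq_iff forall_3)
qed


theorem mainTheorem2:
  fixes p q :: "real \<Rightarrow> real" and a b :: real and A :: "real^3^3"
  assumes "a < b"
    and "smooth_on_interval p {a<..<b}" and "smooth_on_interval q {a<..<b}"
    and "\<forall>u\<in>{a<..<b}. p u > 0"
    and "\<forall>u\<in>{a<..<b}. (deriv p u)\<^sup>2 + (deriv q u)\<^sup>2 = 1"
    and "\<forall>u\<in>{a<..<b}. \<forall>v\<in>{0..<2*pi}. gauss_curvature (surf_rev p q) (u, v) \<noteq> 0"
    and "\<forall>u\<in>{a<..<b}. \<forall>v\<in>{0..<2*pi}.
           lap_II_vec (surf_rev p q) (u, v) = A *v surf_rev p q (u, v)"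
  shows "\<exists>lam mu. A = (\<chi> i j. if i = j then (if i = 3 then mu else lam) else 0)
               \<and> (lam \<noteq> 0 \<or> mu \<noteq> 0)"
proof -
  interpret surface_of_revolution p q "{a<..<b}"
    using assms(2-5) by unfold_locales auto
  interpret nondegenerate_surface_of_revolution p q "{a<..<b}"
  proof
    fix t assume "t \<in> {a<..<b}"
    then have "det_sff X (t, 0) \<noteq> 0"
      using assms(6) by (auto simp: gauss_curvature_def)
    then show "det_II t \<noteq> 0"
      using det_sff_X[OF \<open>t \<in> {a<..<b}\<close>] by simp
  qed
  obtain u where u: "u \<in> {a<..<b}" and "q u \<noteq> 0"
    using q_somewhere_nonzero assms(1) by auto
  have "A *v vector [p u * cos v, p u * sin v, q u] =
      vector [lap_radial u * cos v, lap_radial u * sin v, lap_axial u]" if "v \<in> {0, pi/2, pi}" for v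
  proof -
    have "v \<in> {0..<2*pi}"
      using that pi_gt_zero by (auto, linarith+)
    then show ?thesis
      using assms(7) u by (simp add: lap_II_vec_X X_eq)
  qed
  note diag = matrix_diagonal_if_rotation_compatible[OF _ \<open>q u \<noteq> 0\<close> this]
  have "A$1$1 \<noteq> 0 \<or> A$3$3 \<noteq> 0"
    using lap_radial_or_axial_nonzero[OF u] diag(2,3) p_pos[OF u] by force
  then show ?thesis
    using diag(1) p_pos[OF u] by auto
qed

end
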